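(* Let $\mathcal{C}$ be an $(n,s)$-curve of genus $g$ and let $D$ be a reduced non-special positive divisor of degree $g$ on the affine part of $\mathcal{C}$. Let $I_D\subset\mathbb{C}[x,y]/(f)$ be the ideal of polynomial functions vanishing on $D$ (with multiplicities). Then the images of the $g$ basis monomials $\upsilon_{\mathfrak{w}_1},\dots,\upsilon_{\mathfrak{w}_g}$ form a basis of the vector space $\big(\mathbb{C}[x,y]/(f)\big)/I_D$; that is, every polynomial function on $\mathcal{C}$ is congruent modulo $I_D$ to a unique linear combination of $\upsilon_{\mathfrak{w}_1},\dots,\upsilon_{\mathfrak{w}_g}$.
   Context: An $(n,s)$-curve ($n,s\geqslant2$ coprime) is $f(x,y;\lambda)\equiv -y^n+x^s+\sum_{j=0}^{n-2}\sum_{i=0}^{s-2}\lambda_{ns-in-js}y^jx^i=0$, $\lambda_k\in\mathbb{C}$, $\lambda_k=0$ for $k\leqslant0$, assumed of genus $g=\tfrac12(n-1)(s-1)$, compactified by one point $\infty$. Weights: $\mathrm{wgt}\,x=n$, $\mathrm{wgt}\,y=s$; monomials $\mathfrak{m}_{in+js}=x^iy^j$ ($0\leqslant j<n$) indexed by weight. Gap sequence $\mathfrak{W}=\mathbb{N}_0\setminus\{an+bs\mid a,b\in\mathbb{N}_0\}=\{\mathfrak{w}_1<\dots<\mathfrak{w}_g\}$. Basis monomials: $\upsilon_{\mathfrak{w}_i}=\mathfrak{m}_{2g-1-\mathfrak{w}_i}$, $i=1,\dots,g$; the differentials $\mathrm{d}u_{\mathfrak{w}_i}=\upsilon_{\mathfrak{w}_i}\,\mathrm{d}x/\partial_yf$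 form a basis of holomorphic differentials. A positive divisor is reduced if it contains no full fibre $\{(a,b_1),\dots,(a,b_n)\}$ of $x$; a degree $g$ divisor is non-special if no nonzero holomorphic differential vanishes on it. *)

theory Defs
  imports "HOL-Computational_Algebra.Polynomial" "HOL-Library.Multiset"
begin

text \<open>Bivariate complex polynomials are represented as "complex poly poly":
  the outer variable is y, the coefficients are polynomials in x.\<close>

type_synonym bipoly = "complex poly poly"

definition Xp :: bipoly where "Xp = [:[:0, 1:]:]"
definition Yp :: bipoly where "Yp = [:0, 1:]"
definition cpp :: "complex \<Rightarrow> bipoly" where "cpp c = [:[:c:]:]"

definition eval2 :: "bipoly \<Rightarrow> complex \<Rightarrow> complex \<Rightarrow> complex" where
  "eval2 h a b = poly (map_poly (\<lambda>c. poly c a) h) b"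

definition dY :: "bipoly \<Rightarrow> bipoly" where "dY h = pderiv h"
definition dX :: "bipoly \<Rightarrow> bipoly" where "dX h = map_poly pderiv h"

definition ns_curve :: "nat \<Rightarrow> nat \<Rightarrow> (int \<Rightarrow> complex) \<Rightarrow> bipoly" where
  "ns_curve n s lam =
     - (Yp ^ n) + Xp ^ s
     + (\<Sum>j<n - 1. \<Sum>i<s - 1.
          cpp (lam (int (n * s) - int (i * n) - int (j * s))) * Yp ^ j * Xp ^ i)"

text \<open>The affine curve f = 0 is nonsingular (equivalent to genus (n-1)(s-1)/2).\<close>
definition nonsingular_affine :: "bipoly \<Rightarrow> bool" where
  "nonsingular_affine f \<longleftrightarrow>
     (\<forall>a b. eval2 f a b = 0 \<longrightarrow> eval2 (dX f) a b \<noteq> 0 \<or> eval2 (dY f) a b \<noteq> 0)"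

definition genus :: "nat \<Rightarrow> nat \<Rightarrow> nat" where
  "genus n s = ((n - 1) * (s - 1)) div 2"

text \<open>Gap sequence and its i-th element (1-indexed, increasing).\<close>
definition gaps :: "nat \<Rightarrow> nat \<Rightarrow> nat set" where
  "gaps n s = {w. \<not> (\<exists>a b. w = a * n + b * s)}"

definition gap :: "nat \<Rightarrow> nat \<Rightarrow> nat \<Rightarrow> nat" where
  "gap n s i = sorted_list_of_set (gaps n s) ! (i - 1)"

definition wmonom :: "nat \<Rightarrow> nat \<Rightarrow> nat \<Rightarrow> bipoly" where
  "wmonom n s k = (case (THE (i, j). j < n \<and> i * n + j * s = k) of
                     (i, j) \<Rightarrow> Xp ^ i * Yp ^ j)"

definition upsilon :: "nat \<Rightarrow> nat \<Rightarrow> nat \<Rightarrow> bipoly" where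
  "upsilon n s i = wmonom n s (2 * genus n s - 1 - gap n s i)"

text \<open>Translate: h(x + a, y + b).\<close>
definition shift2 :: "bipoly \<Rightarrow> complex \<Rightarrow> complex \<Rightarrow> bipoly" where
  "shift2 h a b = pcompose (map_poly (\<lambda>c. pcompose c [:a, 1:]) h) [:[:b:], 1:]"

text \<open>Membership in M_P^m, M_P the maximal ideal of the point P in C[x,y].\<close>
definition in_Mpow :: "complex \<times> complex \<Rightarrow> nat \<Rightarrow> bipoly \<Rightarrow> bool" where
  "in_Mpow P m h \<longleftrightarrow>
     (\<forall>i j. i + j < m \<longrightarrow> coeff (coeff (shift2 h (fst P) (snd P)) j) i = 0)"

text \<open>The polynomial function h vanishes to order at least m at the point P of
  the curve f = 0, i.e. h lies in the m-th power of the maximal ideal of the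
  local ring of the curve at P.\<close>
definition ord_ge :: "bipoly \<Rightarrow> complex \<times> complex \<Rightarrow> nat \<Rightarrow> bipoly \<Rightarrow> bool" where
  "ord_ge f P m h \<longleftrightarrow>
     (\<exists>u a b. eval2 u (fst P) (snd P) \<noteq> 0 \<and> u * h = a + b * f \<and> in_Mpow P m a)"

definition vanishes_on :: "bipoly \<Rightarrow> (complex \<times> complex) multiset \<Rightarrow> bipoly \<Rightarrow> bool" where
  "vanishes_on f D h \<longleftrightarrow> (\<forall>P. ord_ge f P (count D P) h)"

definition on_curve :: "bipoly \<Rightarrow> complex \<times> complex \<Rightarrow> bool" where
  "on_curve f P \<longleftrightarrow> eval2 f (fst P) (snd P) = 0"

text \<open>D is reduced: it does not contain the full fibre divisor of x - a for any a,
  i.e. there is no a with D \<ge> (x - a)_0.\<close>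
definition reduced :: "bipoly \<Rightarrow> (complex \<times> complex) multiset \<Rightarrow> bool" where
  "reduced f D \<longleftrightarrow>
     \<not> (\<exists>a. \<forall>P. on_curve f P \<and> fst P = a \<longrightarrow>
              \<not> ord_ge f P (count D P + 1) (Xp - cpp a))"

definition ups_comb :: "nat \<Rightarrow> nat \<Rightarrow> (nat \<Rightarrow> complex) \<Rightarrow> bipoly" where
  "ups_comb n s c = (\<Sum>i = 1..genus n s. cpp (c i) * upsilon n s i)"

text \<open>Non-special: no nonzero holomorphic differential
  sum c_i du_{w_i} = (sum c_i upsilon_{w_i}) dx / f_y vanishes on D.  Since dx/f_y
  has neither zeros nor poles on the affine part, this is the vanishing of
  sum c_i upsilon_{w_i} on D.\<close>
definition nonspecial :: "nat \<Rightarrow> nat \<Rightarrow> (int \<Rightarrow> complex) \<Rightarrow> (complex \<times> complex) multiset \<Rightarrow> bool" where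
  "nonspecial n s lam D \<longleftrightarrow>
     (\<forall>c. vanishes_on (ns_curve n s lam) D (ups_comb n s c) \<longrightarrow>
          (\<forall>i\<in>{1..genus n s}. c i = 0))"

end

theory Submission
  imports Defs "Jordan_Normal_Form.Determinant"
begin

text \<open>At a point \<open>P = (a, b)\<close> of the nonsingular affine curve \<open>f = 0\<close> one has
  \<open>f = f\<^sub>x(P) (x - a) + f\<^sub>y(P) (y - b) + O(2)\<close>, so one of \<open>x - a\<close>, \<open>y - b\<close> is a local
  parameter \<open>t\<close> and, modulo functions vanishing to order \<open>m\<close> at \<open>P\<close>, every polynomial is a
  combination of \<open>1, t, \<dots>, t\<^sup>m\<^sup>-\<^sup>1\<close>. Collecting these expansions over the points of \<open>D\<close>
  attaches to every polynomial a coordinate vector in \<open>\<complex>\<^sup>g\<close> (\<open>g = deg D\<close>) whose vanishing means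
  membership in \<open>I\<^sub>D\<close>; so the quotient by \<open>I\<^sub>D\<close> has dimension at most \<open>g\<close>. Non-speciality says
  that the \<open>g\<close> monomials \<open>\<upsilon>\<^sub>w\<^sub>i\<close> are independent modulo \<open>I\<^sub>D\<close>, so the \<open>g \<times> g\<close> matrix of
  their coordinates is injective, hence invertible, and they span.\<close>

lemma map_poly_add_hom:
  assumes "\<And>x y. \<phi> (x + y) = \<phi> x + \<phi> y" and "\<phi> 0 = 0"
  shows "map_poly \<phi> (p + q) = map_poly \<phi> p + map_poly \<phi> q"
  by (rule poly_eqI) (simp add: coeff_map_poly assms)

lemma map_poly_mult_hom:
  fixes \<phi> :: "'a::comm_semiring_0 \<Rightarrow> 'b::comm_semiring_0"
  assumes add: "\<And>x y. \<phi> (x + y) = \<phi> x + \<phi> y" and mult: "\<And>x y. \<phi> (x * y) = \<phi> x * \<phi> y"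
    and zero: "\<phi> 0 = 0"
  shows "map_poly \<phi> (p * q) = map_poly \<phi> p * map_poly \<phi> q"
  by (rule poly_eqI)
     (simp add: coeff_map_poly coeff_mult zero mult sum_comp_morphism[OF zero add, symmetric] o_def)

lemma cpp_add: "cpp (x + y) = cpp x + cpp y"
  by (simp add: cpp_def)

lemma cpp_mult: "cpp (x * y) = cpp x * cpp y"
  by (simp add: cpp_def)

lemma cpp_diff: "cpp (x - y) = cpp x - cpp y"
  by (simp add: cpp_def)

lemma cpp_uminus: "cpp (- x) = - cpp x"
  by (simp add: cpp_def)

lemma cpp_1 [simp]: "cpp 1 = 1"
  by (simp add: cpp_def one_pCons)

lemma cpp_0 [simp]: "cpp 0 = 0"
  by (simp add: cpp_def)

lemma eval2_add [simp]: "eval2 (p + q) a b = eval2 p a b + eval2 q a b"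
  unfolding eval2_def by (simp add: map_poly_add_hom)

lemma eval2_mult [simp]: "eval2 (p * q) a b = eval2 p a b * eval2 q a b"
  unfolding eval2_def by (simp add: map_poly_mult_hom map_poly_add_hom)

lemma eval2_diff [simp]: "eval2 (p - q) a b = eval2 p a b - eval2 q a b"
  using eval2_add[of "p - q" q a b] by simp

lemma eval2_cpp [simp]: "eval2 (cpp c) a b = c"
  unfolding eval2_def cpp_def by (simp add: map_poly_pCons)

lemma eval2_Xp [simp]: "eval2 Xp a b = a"
  unfolding eval2_def Xp_def by (simp add: map_poly_pCons)

lemma eval2_Yp [simp]: "eval2 Yp a b = b"
  unfolding eval2_def Yp_def by (simp add: map_poly_pCons)

lemma eval2_1 [simp]: "eval2 1 a b = 1"
  using eval2_cpp[of 1 a b] by simp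

lemma cpp_sum: "cpp (sum g A) = (\<Sum>x\<in>A. cpp (g x))"
  by (rule sum_comp_morphism[of cpp, OF cpp_0 cpp_add, unfolded o_def, symmetric])

lemma shift2_add [simp]: "shift2 (p + q) a b = shift2 p a b + shift2 q a b"
  unfolding shift2_def by (simp add: map_poly_add_hom pcompose_add)

lemma shift2_mult [simp]: "shift2 (p * q) a b = shift2 p a b * shift2 q a b"
  unfolding shift2_def by (simp add: map_poly_mult_hom pcompose_add pcompose_mult)

definition Xa :: "complex \<Rightarrow> bipoly" where "Xa a = Xp - cpp a"
definition Yb :: "complex \<Rightarrow> bipoly" where "Yb b = Yp - cpp b"

lemma eval2_Xa [simp]: "eval2 (Xa a) a b = 0"
  by (simp add: Xa_def)

lemma eval2_Yb [simp]: "eval2 (Yb b) a b = 0"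
  by (simp add: Yb_def)

lemma shift2_Xa [simp]: "shift2 (Xa a) a b = Xp"
  by (simp add: Xa_def Xp_def cpp_def shift2_def map_poly_pCons pcompose_pCons)

lemma shift2_Yb [simp]: "shift2 (Yb b) a b = Yp"
  by (simp add: Yb_def Yp_def cpp_def shift2_def map_poly_pCons pcompose_pCons pcompose_1)

definition coeffs_vanish_below :: "nat \<Rightarrow> 'a::zero poly poly \<Rightarrow> bool" where
  "coeffs_vanish_below k H \<longleftrightarrow> (\<forall>i j. i + j < k \<longrightarrow> coeff (coeff H j) i = 0)"

lemma coeffs_vanish_below_mult:
  fixes G H :: "'a::comm_semiring_0 poly poly"
  assumes G: "coeffs_vanish_below k G" and H: "coeffs_vanish_below l H"
  shows "coeffs_vanish_below (k + l) (G * H)"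
  unfolding coeffs_vanish_below_def
proof (intro allI impI)
  fix i j assume ij: "i + j < k + l"
  have "coeff (coeff (G * H) j) i =
      (\<Sum>j1\<le>j. \<Sum>i1\<le>i. coeff (coeff G j1) i1 * coeff (coeff H (j - j1)) (i - i1))"
    by (simp add: coeff_mult coeff_sum)
  also have "\<dots> = 0"
  proof (intro sum.neutral ballI)
    fix j1 i1 assume "j1 \<in> {..j}" "i1 \<in> {..i}"
    then have "i1 + j1 < k \<or> (i - i1) + (j - j1) < l" using ij by auto
    then show "coeff (coeff G j1) i1 * coeff (coeff H (j - j1)) (i - i1) = 0"
      using G H unfolding coeffs_vanish_below_def by auto
  qed
  finally show "coeff (coeff (G * H) j) i = 0" .
qed

lemma coeffs_vanish_below_add:
  "coeffs_vanish_below k G \<Longrightarrow> coeffs_vanish_below k H \<Longrightarrow> coeffs_vanish_below k (G + H)"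
  by (simp add: coeffs_vanish_below_def)

lemma in_Mpow_iff_coeffs_vanish_below:
  "in_Mpow (a, b) k h \<longleftrightarrow> coeffs_vanish_below k (shift2 h a b)"
  by (simp add: in_Mpow_def coeffs_vanish_below_def)

lemma in_Mpow_mult: "in_Mpow P k h \<Longrightarrow> in_Mpow P k (g * h)"
  using coeffs_vanish_below_mult[of 0 _ k]
  by (cases P) (simp add: in_Mpow_iff_coeffs_vanish_below coeffs_vanish_below_def)

lemma in_Mpow_add: "in_Mpow P k h \<Longrightarrow> in_Mpow P k g \<Longrightarrow> in_Mpow P k (h + g)"
  by (cases P) (simp add: in_Mpow_iff_coeffs_vanish_below coeffs_vanish_below_add)

section \<open>Powers of the ideal generated by two elements\<close>

fun in_ideal_pow :: "'a::comm_ring_1 \<Rightarrow> 'a \<Rightarrow> nat \<Rightarrow> 'a \<Rightarrow> bool" where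
  "in_ideal_pow U V 0 h = True"
| "in_ideal_pow U V (Suc k) h =
     (\<exists>g1 g2. h = U * g1 + V * g2 \<and> in_ideal_pow U V k g1 \<and> in_ideal_pow U V k g2)"

declare in_ideal_pow.simps(2) [simp del]

lemma in_ideal_pow_SucI:
  "h = U * g1 + V * g2 \<Longrightarrow> in_ideal_pow U V k g1 \<Longrightarrow> in_ideal_pow U V k g2
    \<Longrightarrow> in_ideal_pow U V (Suc k) h"
  unfolding in_ideal_pow.simps by blast

lemma in_ideal_pow_SucE:
  assumes "in_ideal_pow U V (Suc k) h"
  obtains g1 g2 where "h = U * g1 + V * g2" "in_ideal_pow U V k g1" "in_ideal_pow U V k g2"
  using assms unfolding in_ideal_pow.simps by blast

lemma in_ideal_pow_1I: "h = U * g1 + V * g2 \<Longrightarrow> in_ideal_pow U V 1 h"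
  unfolding One_nat_def by (rule in_ideal_pow_SucI) simp_all

lemma in_ideal_pow_zero [simp]: "in_ideal_pow U V k 0"
proof (induction k)
  case (Suc k)
  show ?case by (rule in_ideal_pow_SucI[of _ _ 0 _ 0]) (simp_all add: Suc)
qed simp

lemma in_ideal_pow_mult: "in_ideal_pow U V k h \<Longrightarrow> in_ideal_pow U V k (g * h)"
proof (induction k arbitrary: h)
  case (Suc k)
  then obtain g1 g2 where "h = U * g1 + V * g2" "in_ideal_pow U V k g1" "in_ideal_pow U V k g2"
    by (auto elim: in_ideal_pow_SucE)
  then show ?case
    by (intro in_ideal_pow_SucI[of _ _ "g * g1" _ "g * g2"]) (simp_all add: Suc.IH algebra_simps)
qed simp

lemma in_ideal_pow_add:
  "in_ideal_pow U V k h \<Longrightarrow> in_ideal_pow U V k h' \<Longrightarrow> in_ideal_pow U V k (h + h')"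
proof (induction k arbitrary: h h')
  case (Suc k)
  obtain g1 g2 where g: "h = U * g1 + V * g2" "in_ideal_pow U V k g1" "in_ideal_pow U V k g2"
    using Suc.prems(1) by (rule in_ideal_pow_SucE)
  obtain g1' g2' where g': "h' = U * g1' + V * g2'" "in_ideal_pow U V k g1'" "in_ideal_pow U V k g2'"
    using Suc.prems(2) by (rule in_ideal_pow_SucE)
  show ?case
    by (intro in_ideal_pow_SucI[of _ _ "g1 + g1'" _ "g2 + g2'"])
       (simp_all add: g g' Suc.IH algebra_simps)
qed simp

lemma in_ideal_pow_prod:
  "in_ideal_pow U V k g \<Longrightarrow> in_ideal_pow U V l h \<Longrightarrow> in_ideal_pow U V (k + l) (g * h)"
proof (induction k arbitrary: g)
  case 0
  then show ?case by (simp add: in_ideal_pow_mult)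
next
  case (Suc k)
  obtain g1 g2 where g: "g = U * g1 + V * g2" "in_ideal_pow U V k g1" "in_ideal_pow U V k g2"
    using Suc.prems(1) by (rule in_ideal_pow_SucE)
  have "g * h = U * (g1 * h) + V * (g2 * h)"
    by (simp add: g(1) algebra_simps)
  then show ?case
    using Suc.IH[OF g(2) Suc.prems(2)] Suc.IH[OF g(3) Suc.prems(2)]
    by (simp add: in_ideal_pow_SucI)
qed

lemma in_ideal_pow_commute: "in_ideal_pow U V k h = in_ideal_pow V U k h"
proof (induction k arbitrary: h)
  case (Suc k)
  have "h = U * g1 + V * g2 \<longleftrightarrow> h = V * g2 + U * g1" for g1 g2
    by (simp add: add.commute)
  then show ?case
    unfolding in_ideal_pow.simps Suc.IH by blast
qed simp

lemma in_ideal_pow_generator: "in_ideal_pow U V 1 U"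
  by (rule in_ideal_pow_1I[of U U 1 V 0]) simp

lemma in_ideal_pow_power: "in_ideal_pow U V k (U ^ k)"
proof (induction k)
  case (Suc k)
  show ?case using in_ideal_pow_prod[OF in_ideal_pow_generator Suc.IH] by simp
qed simp

lemma in_ideal_pow_imp_in_Mpow:
  "in_ideal_pow (Xa a) (Yb b) k h \<Longrightarrow> in_Mpow (a, b) k h"
proof (induction k arbitrary: h)
  case 0
  then show ?case by (simp add: in_Mpow_def)
next
  case (Suc k)
  obtain g1 g2 where g: "h = Xa a * g1 + Yb b * g2"
    "in_ideal_pow (Xa a) (Yb b) k g1" "in_ideal_pow (Xa a) (Yb b) k g2"
    using Suc.prems by (rule in_ideal_pow_SucE)
  have "coeffs_vanish_below 1 Xp" "coeffs_vanish_below 1 Yp"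
    by (simp_all add: coeffs_vanish_below_def Xp_def Yp_def)
  then have "coeffs_vanish_below (1 + k) (Xp * shift2 g1 a b)"
    "coeffs_vanish_below (1 + k) (Yp * shift2 g2 a b)"
    using Suc.IH[OF g(2)] Suc.IH[OF g(3)] coeffs_vanish_below_mult
    unfolding in_Mpow_iff_coeffs_vanish_below by blast+
  then show ?case
    by (simp add: g(1) in_Mpow_iff_coeffs_vanish_below coeffs_vanish_below_add)
qed

section \<open>Expansion in a local parameter at a smooth point\<close>

lemma taylor_first_order: "\<exists>g1 g2. h = cpp (eval2 h a b) + Xa a * g1 + Yb b * g2"
proof -
  define q where "q = poly h [:b:]"
  have outer: "[:- [:b:], 1:] * synthetic_div h [:b:] + [:q:] = h"
    using synthetic_div_correct'[of "[:b:]" h] by (simp add: q_def)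
  have inner: "[:- a, 1:] * synthetic_div q a + [:poly q a:] = q"
    by (rule synthetic_div_correct')
  have "poly q a = eval2 h a b"
    unfolding q_def eval2_def by (induction h) (auto simp: map_poly_pCons)
  then have "[:q:] = Xa a * [:synthetic_div q a:] + cpp (eval2 h a b)"
    using arg_cong[OF inner, of "\<lambda>t. [:t:]"]
    by (simp add: Xa_def Xp_def cpp_def)
  moreover have "[:- [:b:], 1:] = Yb b"
    by (simp add: Yb_def Yp_def cpp_def)
  ultimately have "h = cpp (eval2 h a b) + Xa a * [:synthetic_div q a:] + Yb b * synthetic_div h [:b:]"
    using outer by (simp add: ac_simps)
  then show ?thesis by blast
qed

lemma in_ideal_pow_sub_value: "in_ideal_pow (Xa a) (Yb b) 1 (h - cpp (eval2 h a b))"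
proof -
  obtain g1 g2 where "h = cpp (eval2 h a b) + Xa a * g1 + Yb b * g2"
    using taylor_first_order by blast
  then have "h - cpp (eval2 h a b) = Xa a * g1 + Yb b * g2"
    by (metis add.assoc add_diff_cancel_left')
  then show ?thesis
    by (rule in_ideal_pow_1I)
qed

lemma ord_ge_if_in_ideal_pow:
  assumes "in_ideal_pow (Xa a) (Yb b) m A"
  shows "ord_ge f (a, b) m (A + p * f)"
  unfolding ord_ge_def
  by (rule exI[of _ 1], rule exI[of _ A], rule exI[of _ p])
     (simp add: in_ideal_pow_imp_in_Mpow[OF assms])

lemma dX_mult: "dX (p * q) = dX p * q + p * dX q"
proof (rule poly_eqI)
  fix n
  have pderiv_sum: "pderiv (sum g A) = (\<Sum>x\<in>A. pderiv (g x))" for g :: "nat \<Rightarrow> complex poly" and A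
    by (rule sum_comp_morphism[of pderiv, OF pderiv_0 pderiv_add, unfolded o_def, symmetric])
  have "coeff (dX (p * q)) n =
      (\<Sum>i\<le>n. coeff p i * pderiv (coeff q (n - i)) + coeff q (n - i) * pderiv (coeff p i))"
    by (simp add: dX_def coeff_map_poly coeff_mult pderiv_sum pderiv_mult)
  also have "\<dots> = (\<Sum>i\<le>n. pderiv (coeff p i) * coeff q (n - i)) + (\<Sum>i\<le>n. coeff p i * pderiv (coeff q (n - i)))"
    by (simp add: sum.distrib[symmetric] ac_simps)
  also have "\<dots> = coeff (dX p * q + p * dX q) n"
    by (simp only: coeff_add coeff_mult dX_def coeff_map_poly pderiv_0)
  finally show "coeff (dX (p * q)) n = coeff (dX p * q + p * dX q) n" .
qed

lemma dX_add: "dX (p + q) = dX p + dX q"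
  unfolding dX_def by (rule map_poly_add_hom) (simp_all add: pderiv_add)

lemma dY_mult: "dY (p * q) = dY p * q + p * dY q"
  by (simp add: dY_def pderiv_mult algebra_simps)

lemma dY_add: "dY (p + q) = dY p + dY q"
  by (simp add: dY_def pderiv_add)

lemma dX_Xa: "dX (Xa a) = 1" and dX_Yb: "dX (Yb b) = 0"
  and dY_Xa: "dY (Xa a) = 0" and dY_Yb: "dY (Yb b) = 1"
  by (simp_all add: dX_def dY_def Xa_def Yb_def Xp_def Yp_def cpp_def map_poly_pCons
      pderiv_pCons one_pCons)

lemma linear_part_at_curve_point:
  assumes "eval2 f a b = 0"
  obtains R where
    "f = cpp (eval2 (dX f) a b) * Xa a + cpp (eval2 (dY f) a b) * Yb b + R"
    "in_ideal_pow (Xa a) (Yb b) 2 R"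
proof -
  obtain g1 g2 where f: "f = Xa a * g1 + Yb b * g2"
    using taylor_first_order[of f a b] assms by auto
  obtain g11 g12 where g1: "g1 = cpp (eval2 g1 a b) + Xa a * g11 + Yb b * g12"
    using taylor_first_order by blast
  obtain g21 g22 where g2: "g2 = cpp (eval2 g2 a b) + Xa a * g21 + Yb b * g22"
    using taylor_first_order by blast
  define R where
    "R = Xa a * (Xa a * g11 + Yb b * g12) + Yb b * (Xa a * g21 + Yb b * g22)"
  have "eval2 (dX f) a b = eval2 g1 a b" "eval2 (dY f) a b = eval2 g2 a b"
    by (simp_all add: f dX_mult dX_add dX_Xa dX_Yb dY_mult dY_add dY_Xa dY_Yb)
  then have "f = cpp (eval2 (dX f) a b) * Xa a + cpp (eval2 (dY f) a b) * Yb b + R"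
    by (subst f, subst g1, subst g2) (simp add: R_def algebra_simps)
  moreover have "in_ideal_pow (Xa a) (Yb b) (Suc 1) R"
    unfolding R_def by (rule in_ideal_pow_SucI[OF refl]) (rule in_ideal_pow_1I[OF refl])+
  ultimately show ?thesis
    using that by (simp add: numeral_2_eq_2)
qed

lemma ideal_pow_leading_term:
  assumes const: "\<And>h. \<exists>c. in_ideal_pow U V 1 (h - cpp c)"
    and V: "V = cpp w * U + R + q * f" and R: "in_ideal_pow U V 2 R"
    and h: "in_ideal_pow U V k h"
  shows "\<exists>c r p. h = cpp c * U ^ k + r + p * f \<and> in_ideal_pow U V (Suc k) r"
  using h
proof (induction k arbitrary: h)
  case 0
  obtain c where "in_ideal_pow U V 1 (h - cpp c)"
    using const by blast
  then show ?case
    by (intro exI[of _ c] exI[of _ "h - cpp c"] exI[of _ 0]) simp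
next
  case (Suc k)
  obtain g1 g2 where g: "h = U * g1 + V * g2" "in_ideal_pow U V k g1" "in_ideal_pow U V k g2"
    using Suc.prems by (rule in_ideal_pow_SucE)
  obtain e1 r1 p1 where g1: "g1 = cpp e1 * U ^ k + r1 + p1 * f" "in_ideal_pow U V (Suc k) r1"
    using Suc.IH[OF g(2)] by blast
  obtain e2 r2 p2 where g2: "g2 = cpp e2 * U ^ k + r2 + p2 * f" "in_ideal_pow U V (Suc k) r2"
    using Suc.IH[OF g(3)] by blast
  have VU: "V * (cpp e2 * U ^ k) = cpp e2 * U ^ k * (cpp w * U + R + q * f)"
    by (metis V mult.commute)
  have "h = U * (cpp e1 * U ^ k + r1 + p1 * f) + V * r2 + V * p2 * f + V * (cpp e2 * U ^ k)"
    by (simp add: g(1) g1(1) g2(1) algebra_simps)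
  also have "\<dots> = cpp (e1 + e2 * w) * U ^ Suc k + (U * r1 + V * r2 + cpp e2 * (U ^ k * R))
      + (U * p1 + V * p2 + cpp e2 * U ^ k * q) * f"
    unfolding VU by (simp add: cpp_add cpp_mult algebra_simps)
  finally have "h = \<dots>" .
  moreover have "in_ideal_pow U V (Suc (Suc k)) (U * r1 + V * r2 + cpp e2 * (U ^ k * R))"
  proof -
    have "in_ideal_pow U V 1 V"
      using in_ideal_pow_generator in_ideal_pow_commute by blast
    then have "in_ideal_pow U V (1 + Suc k) (U * r1)" "in_ideal_pow U V (1 + Suc k) (V * r2)"
      using in_ideal_pow_prod in_ideal_pow_generator g1(2) g2(2) by blast+
    moreover have "in_ideal_pow U V (k + 2) (U ^ k * R)"
      by (rule in_ideal_pow_prod[OF in_ideal_pow_power R])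
    ultimately show ?thesis
      by (simp add: in_ideal_pow_add in_ideal_pow_mult)
  qed
  ultimately show ?case
    by blast
qed

lemma expansion_in_first_generator:
  assumes const: "\<And>h. \<exists>c. in_ideal_pow U V 1 (h - cpp c)"
    and V: "V = cpp w * U + R + q * f" and R: "in_ideal_pow U V 2 R"
  shows "\<exists>d A p. h - (\<Sum>l<m. cpp (d l) * U ^ l) = A + p * f \<and> in_ideal_pow U V m A"
proof (induction m)
  case 0
  show ?case
    by (intro exI[of _ "\<lambda>_. 0"] exI[of _ h] exI[of _ 0]) simp
next
  case (Suc m)
  then obtain d A p where A: "h - (\<Sum>l<m. cpp (d l) * U ^ l) = A + p * f" "in_ideal_pow U V m A"
    by blast
  obtain c r p' where r: "A = cpp c * U ^ m + r + p' * f" "in_ideal_pow U V (Suc m) r"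
    using ideal_pow_leading_term[OF const V R A(2)] by blast
  have "(\<Sum>l<Suc m. cpp ((d(m := c)) l) * U ^ l) = (\<Sum>l<m. cpp (d l) * U ^ l) + cpp c * U ^ m"
    by simp
  then have "h - (\<Sum>l<Suc m. cpp ((d(m := c)) l) * U ^ l) = r + (p + p') * f"
    using A(1) r(1) by (simp add: algebra_simps)
  then show ?case
    using r(2) by blast
qed

lemma local_expansion_at_smooth_point:
  assumes on_curve: "eval2 f a b = 0"
    and smooth: "eval2 (dX f) a b \<noteq> 0 \<or> eval2 (dY f) a b \<noteq> 0"
  shows "\<exists>e. \<forall>h. \<exists>d. ord_ge f (a, b) m (h - (\<Sum>l<m. cpp (d l) * e l))"
proof -
  define c1 c2 where "c1 = eval2 (dX f) a b" and "c2 = eval2 (dY f) a b"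
  obtain R where f: "f = cpp c1 * Xa a + cpp c2 * Yb b + R" and R: "in_ideal_pow (Xa a) (Yb b) 2 R"
    using linear_part_at_curve_point[OF on_curve] unfolding c1_def c2_def by blast
  note const = in_ideal_pow_sub_value[of a b]
  have "\<exists>e. \<forall>h. \<exists>d A p. h - (\<Sum>l<m. cpp (d l) * e l) = A + p * f \<and> in_ideal_pow (Xa a) (Yb b) m A"
  proof (cases "c2 = 0")
    case False
    have "cpp (1 / c2) * f = cpp (c1 / c2) * Xa a + Yb b + cpp (1 / c2) * R"
      using False by (simp add: f distrib_left flip: mult.assoc cpp_mult)
    then have "Yb b = cpp (- (c1 / c2)) * Xa a + - (cpp (1 / c2) * R) + cpp (1 / c2) * f"
      by (simp add: cpp_uminus algebra_simps)
    moreover have "in_ideal_pow (Xa a) (Yb b) 2 (- (cpp (1 / c2) * R))"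
      using in_ideal_pow_mult[OF R, of "- cpp (1 / c2)"] by simp
    ultimately show ?thesis
      using expansion_in_first_generator const by blast
  next
    case True
    with smooth have "c1 \<noteq> 0"
      by (simp add: c1_def c2_def)
    have "cpp (1 / c1) * f = Xa a + cpp (c2 / c1) * Yb b + cpp (1 / c1) * R"
      using \<open>c1 \<noteq> 0\<close> by (simp add: f distrib_left flip: mult.assoc cpp_mult)
    then have "Xa a = cpp (- (c2 / c1)) * Yb b + - (cpp (1 / c1) * R) + cpp (1 / c1) * f"
      by (simp add: cpp_uminus algebra_simps)
    moreover have "in_ideal_pow (Yb b) (Xa a) 2 (- (cpp (1 / c1) * R))"
      using in_ideal_pow_mult[OF R, of "- cpp (1 / c1)"] by (simp add: in_ideal_pow_commute[of "Yb b"])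
    ultimately show ?thesis
      using expansion_in_first_generator[of "Yb b" "Xa a"] const
      unfolding in_ideal_pow_commute[of "Yb b"] by blast
  qed
  then show ?thesis
    by (metis ord_ge_if_in_ideal_pow)
qed

lemma ord_ge_add:
  assumes "ord_ge f P m h" "ord_ge f P m h'"
  shows "ord_ge f P m (h + h')"
proof -
  obtain u A p where 1: "eval2 u (fst P) (snd P) \<noteq> 0" "u * h = A + p * f" "in_Mpow P m A"
    using assms(1) unfolding ord_ge_def by blast
  obtain u' A' p' where 2: "eval2 u' (fst P) (snd P) \<noteq> 0" "u' * h' = A' + p' * f" "in_Mpow P m A'"
    using assms(2) unfolding ord_ge_def by blast
  have "(u * u') * (h + h') = u' * (u * h) + u * (u' * h')"
    by (simp add: algebra_simps)
  also have "\<dots> = u' * (A + p * f) + u * (A' + p' * f)"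
    by (simp only: 1(2) 2(2))
  also have "\<dots> = (u' * A + u * A') + (u' * p + u * p') * f"
    by (simp add: algebra_simps)
  finally have "(u * u') * (h + h') = (u' * A + u * A') + (u' * p + u * p') * f" .
  moreover have "eval2 (u * u') (fst P) (snd P) \<noteq> 0"
    using 1(1) 2(1) by simp
  moreover have "in_Mpow P m (u' * A + u * A')"
    using 1(3) 2(3) by (simp add: in_Mpow_add in_Mpow_mult)
  ultimately show ?thesis
    unfolding ord_ge_def by blast
qed

lemma ord_ge_mult:
  assumes "ord_ge f P m h"
  shows "ord_ge f P m (g * h)"
proof -
  obtain u A p where 1: "eval2 u (fst P) (snd P) \<noteq> 0" "u * h = A + p * f" "in_Mpow P m A"
    using assms unfolding ord_ge_def by blast
  have "u * (g * h) = g * A + (g * p) * f"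
    by (metis 1(2) distrib_left mult.assoc mult.left_commute)
  then show ?thesis
    unfolding ord_ge_def using 1(1) in_Mpow_mult[OF 1(3)] by blast
qed

lemma ord_ge_diff:
  assumes "ord_ge f P m h" "ord_ge f P m h'"
  shows "ord_ge f P m (h - h')"
  using ord_ge_add[OF assms(1) ord_ge_mult[OF assms(2), of "- 1"]] by simp

lemma ord_ge_zero_order: "ord_ge f P 0 h"
  unfolding ord_ge_def by (rule exI[of _ 1], rule exI[of _ h], rule exI[of _ 0]) (simp add: in_Mpow_def)

lemma ord_ge_lincomb:
  "finite I \<Longrightarrow> (\<And>i. i \<in> I \<Longrightarrow> ord_ge f P m (h i)) \<Longrightarrow> ord_ge f P m (\<Sum>i\<in>I. g i * h i)"
proof (induction I rule: finite_induct)
  case empty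
  show ?case
    unfolding ord_ge_def
    by (rule exI[of _ 1], rule exI[of _ 0], rule exI[of _ 0]) (simp add: in_Mpow_def shift2_def)
next
  case (insert i I)
  then show ?case by (simp add: ord_ge_add ord_ge_mult)
qed

lemma vanishes_on_diff:
  "vanishes_on f D h \<Longrightarrow> vanishes_on f D h' \<Longrightarrow> vanishes_on f D (h - h')"
  unfolding vanishes_on_def by (blast intro: ord_ge_diff)

section \<open>Coordinates modulo the functions vanishing on a divisor\<close>

definition slots :: "'a multiset \<Rightarrow> ('a \<times> nat) set" where
  "slots D = (SIGMA P:set_mset D. {..<count D P})"

lemma slots_enumeration:
  obtains L where "distinct L" "set L = slots D" "length L = size D"
proof -
  have "finite (slots D)"
    by (simp add: slots_def)
  then obtain L where L: "set L = slots D" "distinct L"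
    using finite_distinct_list by blast
  have "length L = card (slots D)"
    using L distinct_card by fastforce
  also have "\<dots> = size D"
    by (simp add: slots_def card_SigmaI size_multiset_overloaded_eq)
  finally show ?thesis
    using L that by blast
qed

text \<open>\<open>L\<close> enumerates the pairs \<open>(P, l)\<close> with \<open>l < mult\<^sub>P D\<close>, and \<open>E P l\<close> plays the role of
  \<open>t\<^sub>P\<^sup>l\<close> for a local parameter \<open>t\<^sub>P\<close> at \<open>P\<close>; \<open>\<delta> k\<close> is the coefficient of \<open>E P l\<close> when
  \<open>L ! k = (P, l)\<close>.\<close>

definition local_sum ::
    "((complex \<times> complex) \<times> nat) list \<Rightarrow> (complex \<times> complex \<Rightarrow> nat \<Rightarrow> bipoly) \<Rightarrow> (nat \<Rightarrow> complex)
      \<Rightarrow> complex \<times> complex \<Rightarrow> bipoly" where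
  "local_sum L E \<delta> P = (\<Sum>k<length L. if fst (L ! k) = P then cpp (\<delta> k) * E P (snd (L ! k)) else 0)"

definition has_coords ::
    "bipoly \<Rightarrow> (complex \<times> complex) multiset \<Rightarrow> ((complex \<times> complex) \<times> nat) list
      \<Rightarrow> (complex \<times> complex \<Rightarrow> nat \<Rightarrow> bipoly) \<Rightarrow> bipoly \<Rightarrow> (nat \<Rightarrow> complex) \<Rightarrow> bool" where
  "has_coords f D L E h \<delta> \<longleftrightarrow> (\<forall>P. ord_ge f P (count D P) (h - local_sum L E \<delta> P))"

lemma local_sum_lincomb:
  "local_sum L E (\<lambda>k. \<Sum>i\<in>I. c i * \<delta> i k) P = (\<Sum>i\<in>I. cpp (c i) * local_sum L E (\<delta> i) P)"
proof -
  have "local_sum L E (\<lambda>k. \<Sum>i\<in>I. c i * \<delta> i k) P =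
      (\<Sum>k<length L. \<Sum>i\<in>I. cpp (c i) * (if fst (L ! k) = P then cpp (\<delta> i k) * E P (snd (L ! k)) else 0))"
    unfolding local_sum_def
    by (rule sum.cong) (auto simp: cpp_sum cpp_mult sum_distrib_right mult.assoc)
  also have "\<dots> = (\<Sum>i\<in>I. cpp (c i) * local_sum L E (\<delta> i) P)"
    unfolding local_sum_def by (subst sum.swap) (simp add: sum_distrib_left)
  finally show ?thesis .
qed

lemma local_sum_diff:
  "local_sum L E (\<lambda>k. \<delta> k - \<delta>' k) P = local_sum L E \<delta> P - local_sum L E \<delta>' P"
  unfolding local_sum_def sum_subtractf[symmetric]
  by (rule sum.cong) (simp_all add: cpp_diff algebra_simps)

lemma has_coords_lincomb:
  assumes "finite I" "\<And>i. i \<in> I \<Longrightarrow> has_coords f D L E (h i) (\<delta> i)"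
  shows "has_coords f D L E (\<Sum>i\<in>I. cpp (c i) * h i) (\<lambda>k. \<Sum>i\<in>I. c i * \<delta> i k)"
  unfolding has_coords_def
proof
  fix P
  have "(\<Sum>i\<in>I. cpp (c i) * h i) - local_sum L E (\<lambda>k. \<Sum>i\<in>I. c i * \<delta> i k) P
      = (\<Sum>i\<in>I. cpp (c i) * (h i - local_sum L E (\<delta> i) P))"
    unfolding local_sum_lincomb sum_subtractf[symmetric] by (simp add: right_diff_distrib)
  moreover have "ord_ge f P (count D P) (\<Sum>i\<in>I. cpp (c i) * (h i - local_sum L E (\<delta> i) P))"
    using assms(2) unfolding has_coords_def by (intro ord_ge_lincomb[OF assms(1)]) blast
  ultimately show "ord_ge f P (count D P)
      ((\<Sum>i\<in>I. cpp (c i) * h i) - local_sum L E (\<lambda>k. \<Sum>i\<in>I. c i * \<delta> i k) P)"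
    by simp
qed

lemma has_coords_diff:
  assumes "has_coords f D L E h \<delta>" "has_coords f D L E h' \<delta>'"
  shows "has_coords f D L E (h - h') (\<lambda>k. \<delta> k - \<delta>' k)"
proof -
  have "h - h' - local_sum L E (\<lambda>k. \<delta> k - \<delta>' k) P
      = (h - local_sum L E \<delta> P) - (h' - local_sum L E \<delta>' P)" for P
    by (simp add: local_sum_diff)
  then show ?thesis
    using assms unfolding has_coords_def by (metis ord_ge_diff)
qed

lemma has_coords_cong:
  assumes "has_coords f D L E h \<delta>" and "\<And>k. k < length L \<Longrightarrow> \<delta> k = \<delta>' k"
  shows "has_coords f D L E h \<delta>'"
proof -
  have "local_sum L E \<delta> = local_sum L E \<delta>'"
    using assms(2) by (auto simp: local_sum_def fun_eq_iff intro!: sum.cong)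
  then show ?thesis
    using assms(1) by (simp add: has_coords_def)
qed

lemma has_zero_coords_iff: "has_coords f D L E h (\<lambda>_. 0) \<longleftrightarrow> vanishes_on f D h"
  unfolding has_coords_def vanishes_on_def local_sum_def by (simp cong: if_cong)

lemma has_coords_exists:
  assumes L: "distinct L" "set L = slots D"
    and expansion: "\<And>P. P \<in># D \<Longrightarrow> \<exists>d. ord_ge f P (count D P) (h - (\<Sum>l<count D P. cpp (d l) * E P l))"
  shows "\<exists>\<delta>. has_coords f D L E h \<delta>"
proof -
  obtain d where d: "\<And>P. P \<in># D \<Longrightarrow> ord_ge f P (count D P) (h - (\<Sum>l<count D P. cpp (d P l) * E P l))"
    using expansion by metis
  define \<delta> where "\<delta> k = d (fst (L ! k)) (snd (L ! k))" for k
  have local: "local_sum L E \<delta> P = (\<Sum>l<count D P. cpp (d P l) * E P l)" if "P \<in># D" for P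
  proof -
    have "local_sum L E \<delta> P = (\<Sum>x\<in>set L. if fst x = P then cpp (d P (snd x)) * E P (snd x) else 0)"
      unfolding local_sum_def \<delta>_def
      using sum.reindex_bij_betw[OF bij_betw_nth[OF L(1) refl refl],
          of "\<lambda>x. if fst x = P then cpp (d P (snd x)) * E P (snd x) else 0"]
      by (simp add: atLeast0LessThan cong: if_cong)
    also have "\<dots> = (\<Sum>x\<in>Pair P ` {..<count D P}. cpp (d P (snd x)) * E P (snd x))"
      using that by (intro sum.mono_neutral_cong_right) (auto simp: L(2) slots_def)
    also have "\<dots> = (\<Sum>l<count D P. cpp (d P l) * E P l)"
      by (subst sum.reindex) (auto intro: inj_onI)
    finally show ?thesis .
  qed
  have "ord_ge f P (count D P) (h - local_sum L E \<delta> P)" for P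
  proof (cases "P \<in># D")
    case True
    then show ?thesis
      using d local by simp
  next
    case False
    then show ?thesis
      by (simp add: not_in_iff ord_ge_zero_order)
  qed
  then show ?thesis
    unfolding has_coords_def by blast
qed

lemma coordinate_system_exists:
  assumes on_curve: "\<forall>P\<in>#D. on_curve f P" and smooth: "nonsingular_affine f"
  obtains L E where "length L = size D" "\<And>h. \<exists>\<delta>. has_coords f D L E h \<delta>"
proof -
  have "\<exists>e. \<forall>h. \<exists>d. ord_ge f P (count D P) (h - (\<Sum>l<count D P. cpp (d l) * e l))"
    if "P \<in># D" for P
  proof -
    have "eval2 f (fst P) (snd P) = 0"
      using on_curve that by (simp add: on_curve_def)
    moreover from this have "eval2 (dX f) (fst P) (snd P) \<noteq> 0 \<or> eval2 (dY f) (fst P) (snd P) \<noteq> 0"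
      using smooth by (simp add: nonsingular_affine_def)
    ultimately show ?thesis
      using local_expansion_at_smooth_point[of f "fst P" "snd P"] by simp
  qed
  then obtain E where E:
    "\<And>P h. P \<in># D \<Longrightarrow> \<exists>d. ord_ge f P (count D P) (h - (\<Sum>l<count D P. cpp (d l) * E P l))"
    by metis
  obtain L where "distinct L" "set L = slots D" "length L = size D"
    by (rule slots_enumeration)
  then show ?thesis
    using that has_coords_exists E by blast
qed

lemma mult_mat_vec_solvable_if_injective:
  fixes A :: "'a::field mat"
  assumes A: "A \<in> carrier_mat n n"
    and inj: "\<And>v. v \<in> carrier_vec n \<Longrightarrow> A *\<^sub>v v = 0\<^sub>v n \<Longrightarrow> v = 0\<^sub>v n"
    and b: "b \<in> carrier_vec n"
  obtains v where "v \<in> carrier_vec n" "A *\<^sub>v v = b"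
proof -
  have "det A \<noteq> 0"
    using det_0_iff_vec_prod_zero_field[OF A] inj by blast
  then obtain B where B: "B \<in> carrier_mat n n" "A * B = 1\<^sub>m n"
    using det_non_zero_imp_unit[OF A] unfolding Units_def ring_mat_def by auto
  have "A *\<^sub>v (B *\<^sub>v b) = (A * B) *\<^sub>v b"
    using A B(1) b by (simp add: assoc_mult_mat_vec)
  also have "\<dots> = b"
    using B(2) b by simp
  finally show ?thesis
    using that B(1) b mult_mat_vec_carrier by blast
qed

lemma mult_mat_vec_index_shifted:
  fixes \<Delta> :: "nat \<Rightarrow> nat \<Rightarrow> 'a::comm_semiring_0"
  assumes "v \<in> carrier_vec g" "k < g"
  shows "(mat g g (\<lambda>(k, j). \<Delta> (Suc j) k) *\<^sub>v v) $ k = (\<Sum>i=1..g. v $ (i - 1) * \<Delta> i k)"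
proof -
  have "(mat g g (\<lambda>(k, j). \<Delta> (Suc j) k) *\<^sub>v v) $ k = (\<Sum>j<g. v $ (Suc j - 1) * \<Delta> (Suc j) k)"
    using assms by (simp add: scalar_prod_def atLeast0LessThan mult.commute)
  also have "\<dots> = (\<Sum>i=1..g. v $ (i - 1) * \<Delta> i k)"
    using sum.atLeast1_atMost_eq[of "\<lambda>i. v $ (i - 1) * \<Delta> i k" g] by simp
  finally show ?thesis .
qed

lemma spanning_modulo_vanishing:
  assumes len: "length L = g"
    and coords: "\<And>h. \<exists>\<delta>. has_coords f D L E h \<delta>"
    and indep: "\<And>c. vanishes_on f D (\<Sum>i=1..g. cpp (c i) * u i) \<Longrightarrow> \<forall>i\<in>{1..g}. c i = 0"
  shows "\<exists>c. vanishes_on f D (h - (\<Sum>i=1..g. cpp (c i) * u i))"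
proof -
  have "\<forall>i. \<exists>\<delta>. has_coords f D L E (u i) \<delta>"
    using coords by blast
  then obtain \<Delta> where \<Delta>: "\<And>i. has_coords f D L E (u i) (\<Delta> i)"
    by metis
  define A where "A = mat g g (\<lambda>(k, j). \<Delta> (Suc j) k)"
  have comb: "has_coords f D L E (\<Sum>i=1..g. cpp (v $ (i - 1)) * u i) (\<lambda>k. (A *\<^sub>v v) $ k)"
    if "v \<in> carrier_vec g" for v
  proof -
    have "has_coords f D L E (\<Sum>i=1..g. cpp (v $ (i - 1)) * u i) (\<lambda>k. \<Sum>i=1..g. v $ (i - 1) * \<Delta> i k)"
      by (rule has_coords_lincomb) (simp_all add: \<Delta>)
    then show ?thesis
      by (rule has_coords_cong)
         (use mult_mat_vec_index_shifted[OF that] len in \<open>simp add: A_def\<close>)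
  qed
  have inj: "v = 0\<^sub>v g" if v: "v \<in> carrier_vec g" "A *\<^sub>v v = 0\<^sub>v g" for v
  proof -
    have "has_coords f D L E (\<Sum>i=1..g. cpp (v $ (i - 1)) * u i) (\<lambda>_. 0)"
      by (rule has_coords_cong[OF comb[OF v(1)]]) (use v(2) len in simp)
    then have "\<forall>i\<in>{1..g}. v $ (i - 1) = 0"
      using indep by (simp add: has_zero_coords_iff)
    then have "v $ j = 0" if "j < g" for j
      using that by (auto dest: bspec[where x = "Suc j"])
    then show ?thesis
      using v(1) by (intro eq_vecI) auto
  qed
  obtain \<delta> where \<delta>: "has_coords f D L E h \<delta>"
    using coords by blast
  obtain v where v: "v \<in> carrier_vec g" "A *\<^sub>v v = vec g \<delta>"
    using mult_mat_vec_solvable_if_injective[of A g "vec g \<delta>"] inj unfolding A_def by auto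
  have "has_coords f D L E (h - (\<Sum>i=1..g. cpp (v $ (i - 1)) * u i)) (\<lambda>k. \<delta> k - (A *\<^sub>v v) $ k)"
    by (rule has_coords_diff[OF \<delta> comb[OF v(1)]])
  then have "has_coords f D L E (h - (\<Sum>i=1..g. cpp (v $ (i - 1)) * u i)) (\<lambda>_. 0)"
    by (rule has_coords_cong) (use v(2) len in simp)
  then show ?thesis
    by (auto simp: has_zero_coords_iff)
qed

lemma ups_comb_diff: "ups_comb n s c - ups_comb n s c' = ups_comb n s (\<lambda>i. c i - c' i)"
  unfolding ups_comb_def by (simp add: cpp_diff left_diff_distrib sum_subtractf)

theorem mainTheorem3:
  fixes n s :: nat and lam :: "int \<Rightarrow> complex" and D :: "(complex \<times> complex) multiset"
  assumes "n \<ge> 2" and "s \<ge> 2" and "coprime n s"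
    and "\<forall>k \<le> 0. lam k = 0"
    and "nonsingular_affine (ns_curve n s lam)"
    and "\<forall>P \<in># D. on_curve (ns_curve n s lam) P"
    and "size D = genus n s"
    and "reduced (ns_curve n s lam) D"
    and "nonspecial n s lam D"
  shows "\<forall>h :: bipoly.
           (\<exists>c. vanishes_on (ns_curve n s lam) D (h - ups_comb n s c)) \<and>
           (\<forall>c c'. vanishes_on (ns_curve n s lam) D (h - ups_comb n s c) \<and>
                   vanishes_on (ns_curve n s lam) D (h - ups_comb n s c') \<longrightarrow>
                   (\<forall>i\<in>{1..genus n s}. c i = c' i))"
proof (intro allI conjI impI)
  let ?f = "ns_curve n s lam"
  have indep: "\<forall>i\<in>{1..genus n s}. c i = 0" if "vanishes_on ?f D (ups_comb n s c)" for c
    using assms(9) that unfolding nonspecial_def by blast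
  fix h
  obtain L E where "length L = genus n s" "\<And>h. \<exists>\<delta>. has_coords ?f D L E h \<delta>"
    using coordinate_system_exists[OF assms(6,5)] assms(7) by metis
  then show "\<exists>c. vanishes_on ?f D (h - ups_comb n s c)"
    using spanning_modulo_vanishing[where u = "upsilon n s"] indep unfolding ups_comb_def by blast
  fix c c'
  assume "vanishes_on ?f D (h - ups_comb n s c) \<and> vanishes_on ?f D (h - ups_comb n s c')"
  then have "vanishes_on ?f D (ups_comb n s (\<lambda>i. c' i - c i))"
    using vanishes_on_diff[of ?f D "h - ups_comb n s c" "h - ups_comb n s c'"]
    by (simp add: ups_comb_diff[symmetric])
  then show "\<forall>i\<in>{1..genus n s}. c i = c' i"
    using indep by fastforce
qed

end
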